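(* Let $\mathbb{Z}_{\ge 0}$ be the commutative monoid of nonnegative integers under addition. Then the simplicial set $K(\mathbb{Z}_{\ge 0},2)$ is a Skvortsov–Shehtman complex but is not a Kan complex.
   Context: For a commutative monoid $M$ (written multiplicatively), $K(M,2)$ is the simplicial set whose $n$-simplices are families $(a_{ijk})_{0\le i<j<k\le n}$ of elements of $M$ satisfying $a_{ikl}a_{ijk}=a_{ijl}a_{jkl}$ for all $0\le i<j<k<l\le n$; the $j$-th face map omits all entries involving the index $j$ (and reindexes), and the $j$-th degeneracy map repeats the index $j$, inserting the unit of $M$ at the new entries (it is the Duskin nerve of the one-object, one-1-morphism 2-category whose 2-morphisms are the elements of $M$). For $M=\mathbb{Z}_{\ge0}$ the monoid operation is addition, so the relations read $a_{ikl}+a_{ijk}=a_{ijl}+a_{jkl}$. A simplicial set $S$ is a Skvortsov–Shehtman complex (SS-complex) if it satisfies all Beck–Chevalley conditions $\mathrm{BC}_{p,q}[n]$: for all $n>1$ and all $0\le p<q\le n$, for any $(n-1)$-simplices $c_p,c_q$ of $S$ with $d_pc_q=d_{q-1}c_p$ there exists an $n$-simplex $x$ of $S$ with $d_px=c_p$ and $d_qx=c_q$. A Kan complex is a simplicial set satisfying the Kan horn-filling conditions for all $n>0$, $0\le p\le n$. *)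

theory Defs
  imports Main
begin

text \<open>A (semi)simplicial set presented by its sets of n-simplices S n and face maps
  face n j : S n \<rightarrow> S (n-1) (the j-th face of an n-simplex, 0 \<le> j \<le> n).
  Degeneracies play no role in the Beck-Chevalley or Kan conditions.\<close>

definition SS_complex :: "(nat \<Rightarrow> 'a set) \<Rightarrow> (nat \<Rightarrow> nat \<Rightarrow> 'a \<Rightarrow> 'a) \<Rightarrow> bool" where
  "SS_complex S face \<longleftrightarrow>
     (\<forall>n p q cp cq. 1 < n \<longrightarrow> p < q \<longrightarrow> q \<le> n \<longrightarrow>
        cp \<in> S (n - 1) \<longrightarrow> cq \<in> S (n - 1) \<longrightarrow>
        face (n - 1) p cq = face (n - 1) (q - 1) cp \<longrightarrow>
        (\<exists>x \<in> S n. face n p x = cp \<and> face n q x = cq))"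

definition Kan_complex :: "(nat \<Rightarrow> 'a set) \<Rightarrow> (nat \<Rightarrow> nat \<Rightarrow> 'a \<Rightarrow> 'a) \<Rightarrow> bool" where
  "Kan_complex S face \<longleftrightarrow>
     (\<forall>n p (c :: nat \<Rightarrow> 'a). 0 < n \<longrightarrow> p \<le> n \<longrightarrow>
        (\<forall>i \<le> n. i \<noteq> p \<longrightarrow> c i \<in> S (n - 1)) \<longrightarrow>
        (\<forall>i j. i < j \<longrightarrow> j \<le> n \<longrightarrow> i \<noteq> p \<longrightarrow> j \<noteq> p \<longrightarrow>
            face (n - 1) i (c j) = face (n - 1) (j - 1) (c i)) \<longrightarrow>
        (\<exists>x \<in> S n. \<forall>i \<le> n. i \<noteq> p \<longrightarrow> face n i x = c i))"

text \<open>K(Z_{\<ge>0},2): an n-simplex is a family a i j k (i<j<k\<le>n) of naturals satisfying the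
  cocycle relation; we represent it as a function extended by 0 outside the index range.\<close>

definition K2_simplices :: "nat \<Rightarrow> (nat \<Rightarrow> nat \<Rightarrow> nat \<Rightarrow> nat) set" where
  "K2_simplices n = {a. (\<forall>i j k. \<not> (i < j \<and> j < k \<and> k \<le> n) \<longrightarrow> a i j k = 0) \<and>
      (\<forall>i j k l. i < j \<longrightarrow> j < k \<longrightarrow> k < l \<longrightarrow> l \<le> n \<longrightarrow>
          a i k l + a i j k = a i j l + a j k l)}"

definition skip :: "nat \<Rightarrow> nat \<Rightarrow> nat" where
  "skip j i = (if i < j then i else i + 1)"

definition rep :: "nat \<Rightarrow> nat \<Rightarrow> nat" where
  "rep j i = (if i \<le> j then i else i - 1)"

definition K2_face :: "nat \<Rightarrow> nat \<Rightarrow> (nat \<Rightarrow> nat \<Rightarrow> nat \<Rightarrow> nat) \<Rightarrow> (nat \<Rightarrow> nat \<Rightarrow> nat \<Rightarrow> nat)" where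
  "K2_face n j a = (\<lambda>i k l. if i < k \<and> k < l \<and> l \<le> n - 1
                      then a (skip j i) (skip j k) (skip j l) else 0)"

text \<open>degeneracy (not needed for the statement): inserts the unit 0 at new entries\<close>
definition K2_degen :: "nat \<Rightarrow> nat \<Rightarrow> (nat \<Rightarrow> nat \<Rightarrow> nat \<Rightarrow> nat) \<Rightarrow> (nat \<Rightarrow> nat \<Rightarrow> nat \<Rightarrow> nat)" where
  "K2_degen n j a = (\<lambda>i k l. if i < k \<and> k < l \<and> l \<le> n + 1
      \<and> rep j i < rep j k \<and> rep j k < rep j l
      then a (rep j i) (rep j k) (rep j l) else 0)"

end

theory Submission
  imports Defs
begin

(* Over the integers every 2-cocycle a on a simplex is a coboundary: coning off from a vertex r
   gives an edge potential y with a i j k = y i j + y j k - y i k, and a is nonnegative exactly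
   when y satisfies the triangle inequality y i k <= y i j + y j k.  So the n-simplices of
   K(Z>=0, 2) are the coboundaries of the integer edge potentials on the n-simplex that obey the
   triangle inequality.

   For the Beck-Chevalley condition, cone the two given faces off from a common vertex r other
   than p and q.  The faces agree on their common face, so the two potentials agree where both
   are defined and together fix y on every edge except {p, q}.  The value on {p, q} is bounded
   below by the triangles {k, p, q} with k < p or q < k and above by those with p < k < q; every
   lower bound is at most every upper bound by the triangle inequalities of the tetrahedra
   through p and q, so an admissible value exists.

   Kan fails for the horn Lambda^3_1 whose face d_3 has a 0 1 2 = 1 and whose other faces
   vanish: the cocycle relation of a filler x would give x 0 2 3 + 1 = x 0 1 3 + x 1 2 3 = 0. *)

definition unskip :: "nat \<Rightarrow> nat \<Rightarrow> nat" where
  "unskip p v = (if v < p then v else v - 1)"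

lemma unskip_skip [simp]: "unskip p (skip p v) = v"
  by (simp add: skip_def unskip_def)

lemma self_neq_skip [simp]: "p \<noteq> skip p v"
  by (auto simp: skip_def)

lemma skip_less_skip_iff [simp]: "skip p u < skip p v \<longleftrightarrow> u < v"
  by (simp add: skip_def)

lemma skip_le: "0 < n \<Longrightarrow> v \<le> n - 1 \<Longrightarrow> skip p v \<le> n"
  by (auto simp: skip_def)

lemma unskip_less_unskip: "u < v \<Longrightarrow> u \<noteq> p \<Longrightarrow> v \<noteq> p \<Longrightarrow> unskip p u < unskip p v"
  by (auto simp: unskip_def)

lemma strict_mono_on_unskip: "p \<notin> V \<Longrightarrow> strict_mono_on V (unskip p)"
  unfolding strict_mono_on_def by (metis unskip_less_unskip)

definition cocycle_on :: "nat set \<Rightarrow> (nat \<Rightarrow> nat \<Rightarrow> nat \<Rightarrow> 'a::plus) \<Rightarrow> bool" where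
  "cocycle_on V f \<longleftrightarrow> (\<forall>i\<in>V. \<forall>j\<in>V. \<forall>k\<in>V. \<forall>l\<in>V. i < j \<longrightarrow> j < k \<longrightarrow> k < l \<longrightarrow>
      f i k l + f i j k = f i j l + f j k l)"

lemma cocycle_on_reindex:
  assumes "cocycle_on W f" "strict_mono_on V g" "g ` V \<subseteq> W"
  shows "cocycle_on V (\<lambda>i j k. f (g i) (g j) (g k))"
  using assms unfolding cocycle_on_def strict_mono_on_def by (simp add: image_subset_iff)

definition coboundary :: "(nat \<Rightarrow> nat \<Rightarrow> 'a::ab_group_add) \<Rightarrow> nat \<Rightarrow> nat \<Rightarrow> nat \<Rightarrow> 'a" where
  "coboundary y i j k = y i j + y j k - y i k"

(* Contracting homotopy from the vertex r: y i j is f on the triangle {r, i, j}, signed by the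
   permutation that sorts r, i, j. *)
definition cone_potential :: "nat \<Rightarrow> (nat \<Rightarrow> nat \<Rightarrow> nat \<Rightarrow> 'a::ab_group_add) \<Rightarrow> nat \<Rightarrow> nat \<Rightarrow> 'a" where
  "cone_potential r f i j =
     (if r = i \<or> r = j then 0 else if r < i then f r i j else if r < j then - f i r j else f i j r)"

lemma cone_potential_cong:
  assumes "\<And>a b c. a \<in> V \<Longrightarrow> b \<in> V \<Longrightarrow> c \<in> V \<Longrightarrow> a < b \<Longrightarrow> b < c \<Longrightarrow> f a b c = g a b c"
    and "r \<in> V" "i \<in> V" "j \<in> V" "i < j"
  shows "cone_potential r f i j = cone_potential r g i j"
  using assms by (auto simp: cone_potential_def)

lemma cocycle_on_eq_coboundary_cone:
  assumes coc: "cocycle_on V f" and V: "r \<in> V" "i \<in> V" "j \<in> V" "k \<in> V" and "i < j" "j < k"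
  shows "f i j k = coboundary (cone_potential r f) i j k"
proof -
  have rel: "f a c d + f a b c = f a b d + f b c d"
    if "a \<in> V" "b \<in> V" "c \<in> V" "d \<in> V" "a < b" "b < c" "c < d" for a b c d
    using coc that unfolding cocycle_on_def by blast
  consider "r < i" | "r = i" | "i < r" "r < j" | "r = j" | "j < r" "r < k" | "r = k" | "k < r"
    by linarith
  then show ?thesis
  proof cases
    case 1
    with rel[of r i j k] show ?thesis using V \<open>i < j\<close> \<open>j < k\<close>
      by (simp add: coboundary_def cone_potential_def algebra_simps)
  next
    case 3
    with rel[of i r j k] show ?thesis using V \<open>i < j\<close> \<open>j < k\<close>
      by (simp add: coboundary_def cone_potential_def algebra_simps)
  next
    case 5
    with rel[of i j r k] show ?thesis using V \<open>i < j\<close> \<open>j < k\<close>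
      by (simp add: coboundary_def cone_potential_def algebra_simps)
  next
    case 7
    with rel[of i j k r] show ?thesis using V \<open>i < j\<close> \<open>j < k\<close>
      by (simp add: coboundary_def cone_potential_def algebra_simps)
  qed (use \<open>i < j\<close> \<open>j < k\<close> in \<open>simp_all add: coboundary_def cone_potential_def\<close>)
qed

definition triangle_ineq :: "nat \<Rightarrow> (nat \<Rightarrow> nat \<Rightarrow> 'a::{ord,plus}) \<Rightarrow> bool" where
  "triangle_ineq n y \<longleftrightarrow> (\<forall>i j k. i < j \<longrightarrow> j < k \<longrightarrow> k \<le> n \<longrightarrow> y i k \<le> y i j + y j k)"

lemma exists_between_finite:
  fixes L U :: "'a::linorder set"
  assumes "finite L" "finite U" "\<And>l u. l \<in> L \<Longrightarrow> u \<in> U \<Longrightarrow> l \<le> u"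
  shows "\<exists>t. (\<forall>l\<in>L. l \<le> t) \<and> (\<forall>u\<in>U. t \<le> u)"
proof (cases "L = {}")
  case True
  then show ?thesis
    using assms(2) by (cases "U = {}") (auto intro: exI[of _ "Min U"])
next
  case False
  then show ?thesis
    using assms by (intro exI[of _ "Max L"]) auto
qed

lemma triangle_ineq_extend_edge:
  fixes y :: "nat \<Rightarrow> nat \<Rightarrow> int"
  assumes "p < q" "q \<le> n"
    and tri: "\<And>i j k. i < j \<Longrightarrow> j < k \<Longrightarrow> k \<le> n \<Longrightarrow> \<not> {p, q} \<subseteq> {i, j, k} \<Longrightarrow>
      y i k \<le> y i j + y j k"
  shows "\<exists>t. triangle_ineq n (y(p := (y p)(q := t)))"
proof -
  define L where "L = (\<lambda>k. y k q - y k p) ` {..<p} \<union> (\<lambda>k. y p k - y q k) ` {q<..n}"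
  define U where "U = (\<lambda>k. y p k + y k q) ` {p<..<q}"
  have "l \<le> u" if "l \<in> L" "u \<in> U" for l u
  proof -
    obtain m where m: "p < m" "m < q" "u = y p m + y m q"
      using \<open>u \<in> U\<close> unfolding U_def by auto
    from \<open>l \<in> L\<close> consider k where "k < p" "l = y k q - y k p"
      | k where "q < k" "k \<le> n" "l = y p k - y q k"
      unfolding L_def by auto
    then show ?thesis
    proof cases
      case 1
      then have "y k q \<le> y k m + y m q" "y k m \<le> y k p + y p m"
        using tri m \<open>q \<le> n\<close> by auto
      with 1 m show ?thesis by linarith
    next
      case 2
      then have "y p k \<le> y p m + y m k" "y m k \<le> y m q + y q k"
        using tri m \<open>q \<le> n\<close> by auto
      with 2 m show ?thesis by linarith
    qed
  qed
  then obtain t where t: "\<forall>l\<in>L. l \<le> t" "\<forall>u\<in>U. t \<le> u"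
    using exists_between_finite[of L U] unfolding L_def U_def by blast
  have below_left: "y k q - y k p \<le> t" if "k < p" for k
    using t that unfolding L_def by auto
  have below_right: "y p k - y q k \<le> t" if "q < k" "k \<le> n" for k
    using t that unfolding L_def by auto
  have above: "t \<le> y p k + y k q" if "p < k" "k < q" for k
    using t that unfolding U_def by auto
  define y' where "y' = y(p := (y p)(q := t))"
  have "y' i k \<le> y' i j + y' j k" if "i < j" "j < k" "k \<le> n" for i j k
  proof (cases "{p, q} \<subseteq> {i, j, k}")
    case False
    then show ?thesis using tri that by (auto simp: y'_def)
  next
    case True
    then have "(j = p \<and> k = q) \<or> (i = p \<and> k = q) \<or> (i = p \<and> j = q)"
      using that \<open>p < q\<close> by auto
    then show ?thesis
    proof (elim disjE conjE)
      assume "j = p" "k = q"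
      with below_left[of i] that show ?thesis by (auto simp: y'_def)
    next
      assume "i = p" "k = q"
      with above[of j] that show ?thesis by (auto simp: y'_def)
    next
      assume "i = p" "j = q"
      with below_right[of k] that show ?thesis by (auto simp: y'_def)
    qed
  qed
  then show ?thesis unfolding triangle_ineq_def y'_def by blast
qed

lemma K2_simplex_cocycle:
  "a \<in> K2_simplices n \<Longrightarrow> i < j \<Longrightarrow> j < k \<Longrightarrow> k < l \<Longrightarrow> l \<le> n \<Longrightarrow>
    a i k l + a i j k = a i j l + a j k l"
  unfolding K2_simplices_def by blast

lemma K2_simplex_cocycle_on:
  "a \<in> K2_simplices n \<Longrightarrow> cocycle_on {..n} (\<lambda>i j k. int (a i j k))"
  unfolding cocycle_on_def by (simp add: K2_simplex_cocycle flip: of_nat_add)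

definition K2_of_potential :: "nat \<Rightarrow> (nat \<Rightarrow> nat \<Rightarrow> int) \<Rightarrow> nat \<Rightarrow> nat \<Rightarrow> nat \<Rightarrow> nat" where
  "K2_of_potential n y = (\<lambda>i j k. if i < j \<and> j < k \<and> k \<le> n then nat (coboundary y i j k) else 0)"

lemma K2_of_potential_in_K2_simplices:
  assumes "triangle_ineq n y"
  shows "K2_of_potential n y \<in> K2_simplices n"
proof -
  have "nat (coboundary y i k l) + nat (coboundary y i j k) =
      nat (coboundary y i j l) + nat (coboundary y j k l)"
    if "i < j" "j < k" "k < l" "l \<le> n" for i j k l
  proof -
    have "coboundary y i k l \<ge> 0" "coboundary y i j k \<ge> 0"
      "coboundary y i j l \<ge> 0" "coboundary y j k l \<ge> 0"
      using assms that unfolding triangle_ineq_def coboundary_def by force+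
    then show ?thesis unfolding coboundary_def by simp
  qed
  then show ?thesis
    unfolding K2_simplices_def K2_of_potential_def by auto
qed

lemma K2_face_K2_of_potential:
  assumes "0 < n"
  shows "K2_face n p (K2_of_potential n y) = K2_of_potential (n - 1) (\<lambda>i j. y (skip p i) (skip p j))"
  using assms by (auto simp: K2_face_def K2_of_potential_def coboundary_def skip_def fun_eq_iff)

lemma K2_of_potential_eqI:
  assumes "a \<in> K2_simplices n"
    and "\<And>i j k. i < j \<Longrightarrow> j < k \<Longrightarrow> k \<le> n \<Longrightarrow> coboundary y i j k = int (a i j k)"
  shows "K2_of_potential n y = a"
  using assms unfolding K2_simplices_def K2_of_potential_def by (auto simp: fun_eq_iff)

lemma K2_face_K2_of_potential_eqI:
  assumes "0 < n" "c \<in> K2_simplices (n - 1)"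
    and "\<And>i j k. i < j \<Longrightarrow> j < k \<Longrightarrow> k \<le> n \<Longrightarrow> s \<notin> {i, j, k} \<Longrightarrow>
      coboundary y i j k = int (c (unskip s i) (unskip s j) (unskip s k))"
  shows "K2_face n s (K2_of_potential n y) = c"
  unfolding K2_face_K2_of_potential[OF \<open>0 < n\<close>]
proof (rule K2_of_potential_eqI[OF \<open>c \<in> K2_simplices (n - 1)\<close>])
  fix i j k assume "i < j" "j < k" "k \<le> n - 1"
  then show "coboundary (\<lambda>i j. y (skip s i) (skip s j)) i j k = int (c i j k)"
    using assms(3)[of "skip s i" "skip s j" "skip s k"] skip_le[OF \<open>0 < n\<close>, of k s]
    by (simp add: coboundary_def)
qed

lemma K2_not_Kan: "\<not> Kan_complex K2_simplices K2_face"
proof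
  assume "Kan_complex K2_simplices K2_face"
  define e :: "nat \<Rightarrow> nat \<Rightarrow> nat \<Rightarrow> nat" where "e = (\<lambda>i j k. if i = 0 \<and> j = 1 \<and> k = 2 then 1 else 0)"
  define c :: "nat \<Rightarrow> nat \<Rightarrow> nat \<Rightarrow> nat \<Rightarrow> nat" where "c = (\<lambda>i. if i = 3 then e else (\<lambda>_ _ _. 0))"
  have "c i \<in> K2_simplices 2" for i
    unfolding c_def e_def K2_simplices_def by auto
  moreover have "K2_face 2 i (c j) = K2_face 2 (j - 1) (c i)" for i j
    \<comment> \<open>faces of 2-simplices are 1-simplices, which are identically 0\<close>
    unfolding K2_face_def by (rule ext)+ auto
  ultimately obtain x where x: "x \<in> K2_simplices 3" "\<forall>i\<le>3. i \<noteq> 1 \<longrightarrow> K2_face 3 i x = c i"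
    using \<open>Kan_complex K2_simplices K2_face\<close>[unfolded Kan_complex_def, rule_format, of 3 1 c] by auto
  have "K2_face 3 0 x 0 1 2 = c 0 0 1 2" "K2_face 3 2 x 0 1 2 = c 2 0 1 2" "K2_face 3 3 x 0 1 2 = c 3 0 1 2"
    using x(2) by auto
  then have "x 1 2 3 = 0" "x 0 1 3 = 0" "x 0 1 2 = 1"
    unfolding K2_face_def skip_def c_def e_def by (auto simp: eval_nat_numeral)
  moreover have "x 0 2 3 + x 0 1 2 = x 0 1 3 + x 1 2 3"
    using K2_simplex_cocycle[OF x(1), of 0 1 2 3] by simp
  ultimately show False by simp
qed

lemma K2_Beck_Chevalley_filler:
  assumes "1 < n" and pq: "p < q" "q \<le> n"
    and cp: "cp \<in> K2_simplices (n - 1)" and cq: "cq \<in> K2_simplices (n - 1)"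
    and compat: "K2_face (n - 1) p cq = K2_face (n - 1) (q - 1) cp"
  shows "\<exists>x \<in> K2_simplices n. K2_face n p x = cp \<and> K2_face n q x = cq"
proof -
  define P where "P i j k = int (cp (unskip p i) (unskip p j) (unskip p k))" for i j k
  define Q where "Q i j k = int (cq (unskip q i) (unskip q j) (unskip q k))" for i j k
  have unskip_range: "unskip s ` ({..n} - {s}) \<subseteq> {..n - 1}" if "s \<le> n" for s
    using that by (auto simp: unskip_def)
  have P_cocycle: "cocycle_on ({..n} - {p}) P"
    unfolding P_def using pq
    by (intro cocycle_on_reindex[OF K2_simplex_cocycle_on[OF cp]] strict_mono_on_unskip unskip_range) auto
  have Q_cocycle: "cocycle_on ({..n} - {q}) Q"
    unfolding Q_def using pq
    by (intro cocycle_on_reindex[OF K2_simplex_cocycle_on[OF cq]] strict_mono_on_unskip unskip_range) auto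
  have P_eq_Q: "P a b c = Q a b c"
    if "a \<in> {..n} - {p, q}" "b \<in> {..n} - {p, q}" "c \<in> {..n} - {p, q}" "a < b" "b < c" for a b c
  proof -
    \<comment> \<open>w v is the index of the vertex v in the common face of cp and cq\<close>
    define w where "w v = unskip p (unskip q v)" for v
    have w: "skip p (w v) = unskip q v" "skip (q - 1) (w v) = unskip p v" "w v \<le> n - 1 - 1"
      if "v \<in> {..n} - {p, q}" for v
      using that pq by (auto simp: w_def skip_def unskip_def)
    have w_mono: "w u < w v" if "u < v" "u \<in> {..n} - {p, q}" "v \<in> {..n} - {p, q}" for u v
      using that pq by (auto simp: w_def unskip_def)
    have "K2_face (n - 1) p cq (w a) (w b) (w c) = K2_face (n - 1) (q - 1) cp (w a) (w b) (w c)"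
      by (simp only: compat)
    then show ?thesis
      using w_mono[of a b] w_mono[of b c] w[of a] w[of b] w[of c] that
      unfolding K2_face_def P_def Q_def by simp
  qed
  have "\<exists>r \<le> n. r \<noteq> p \<and> r \<noteq> q"
    using \<open>1 < n\<close> by presburger
  then obtain r where r: "r \<le> n" "r \<noteq> p" "r \<noteq> q"
    by blast
  define y where "y i j = (if i \<noteq> p \<and> j \<noteq> p then cone_potential r P i j else cone_potential r Q i j)"
    for i j
  have y_P: "coboundary y i j k = P i j k" if "i < j" "j < k" "k \<le> n" "p \<notin> {i, j, k}" for i j k
    using cocycle_on_eq_coboundary_cone[OF P_cocycle, of r i j k] that r
    by (simp add: y_def coboundary_def)
  have y_Q_edge: "y i j = cone_potential r Q i j" if "i < j" "j \<le> n" "i \<noteq> q" "j \<noteq> q" for i j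
    using cone_potential_cong[of "{..n} - {p, q}" P Q r i j] P_eq_Q that r by (auto simp: y_def)
  have y_Q: "coboundary y i j k = Q i j k" if "i < j" "j < k" "k \<le> n" "q \<notin> {i, j, k}" for i j k
    using cocycle_on_eq_coboundary_cone[OF Q_cocycle, of r i j k] y_Q_edge[of i j] y_Q_edge[of j k]
      y_Q_edge[of i k] that r
    by (simp add: coboundary_def)
  have y_triangle: "y i k \<le> y i j + y j k"
    if "i < j" "j < k" "k \<le> n" "\<not> {p, q} \<subseteq> {i, j, k}" for i j k
  proof -
    have "coboundary y i j k \<ge> 0"
    proof (cases "p \<in> {i, j, k}")
      case True
      then have "q \<notin> {i, j, k}"
        using that(4) by blast
      then show ?thesis
        using y_Q[OF that(1-3)] by (simp add: Q_def)
    next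
      case False
      then show ?thesis
        using y_P[OF that(1-3)] by (simp add: P_def)
    qed
    then show ?thesis unfolding coboundary_def by simp
  qed
  obtain t where tri: "triangle_ineq n (y(p := (y p)(q := t)))"
    using triangle_ineq_extend_edge[of p q n y, OF pq y_triangle] by blast
  define y' where "y' = y(p := (y p)(q := t))"
  have y'_coboundary: "coboundary y' i j k = coboundary y i j k"
    if "i < j" "j < k" "\<not> {p, q} \<subseteq> {i, j, k}" for i j k
    using that by (auto simp: y'_def coboundary_def)
  have "0 < n"
    using \<open>1 < n\<close> by simp
  have "K2_face n p (K2_of_potential n y') = cp"
    using \<open>0 < n\<close> cp by (rule K2_face_K2_of_potential_eqI) (simp add: y'_coboundary y_P P_def)
  moreover have "K2_face n q (K2_of_potential n y') = cq"
    using \<open>0 < n\<close> cq by (rule K2_face_K2_of_potential_eqI) (simp add: y'_coboundary y_Q Q_def)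
  moreover have "K2_of_potential n y' \<in> K2_simplices n"
    unfolding y'_def using tri by (rule K2_of_potential_in_K2_simplices)
  ultimately show ?thesis by blast
qed

theorem mainTheorem1:
  shows "SS_complex K2_simplices K2_face \<and> \<not> Kan_complex K2_simplices K2_face"
  using K2_Beck_Chevalley_filler K2_not_Kan unfolding SS_complex_def by blast

end
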